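(* The joint policy $\boldsymbol{\pi}^{\text{API}}_{\text{push}}(\beta\mid\boldsymbol{\pi}_{\text{e}}^0)$ returned by the Alternating Policy Iteration (API) scheme started from initial encoder policy $\boldsymbol{\pi}_{\text{e}}^0$ does not always outperform the optimal periodic policy: there exist an instance $\langle\mathcal{S},\mathcal{A},\mathbf{P},r,\gamma,\beta\rangle$ and an initial encoder policy $\boldsymbol{\pi}_{\text{e}}^0$ such that $R_\beta^{\boldsymbol{\pi}^{\text{API}}_{\text{push}}(\beta\mid\boldsymbol{\pi}_{\text{e}}^0)}<R_\beta^{\boldsymbol{\pi}^*_{\text{per}}(\beta)}$.
   Context: Setting: finite state set $\mathcal{S}$, finite control action set $\mathcal{A}$, stochastic matrices $\mathbf{P}^a$ ($a\in\mathcal{A}$), reward $r_{s,s'}(a)$, discount $\gamma\in[0,1)$, communication cost $\beta>0$, initial state distribution. A Markov process evolves as $s_{t+1}\sim P^{a_t}_{s_t,\cdot}$; at each time $t$ either $s_t$ is transmitted to the decoder ($c_t=1$) or not ($c_t=0$); the decoder chooses $a_t=\pi_{\text{d}}(\Delta_t,s_{t-\Delta_t})\in\mathcal{A}$, where $\Delta_t\le T_{\max}$ is the time since the last transmission and $s_{t-\Delta_t}$ the last transmitted state; reward $r_t=r_{s_t,s_{t+1}}(a_t)$. For a joint policy $\boldsymbol{\pi}$, $R_\beta^{\boldsymbol{\pi}}=\mathbb{E}\big[\sum_t\gamma^t(r_t-\beta c_t)\big]$. Periodic policies transmit every $\tau$ steps for a fixed $\tau\in\{0,\dots,T_{\max}\}$;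 $\boldsymbol{\pi}^*_{\text{per}}(\beta)$ maximizes $R_\beta$ over $\tau$ and $\boldsymbol{\pi}_{\text{d}}$. Push-based policies: an encoder observing $s_t$ decides $c_t=\pi_{\text{e}}(s_t,\Delta_t,s_{t-\Delta_t})$. API scheme: from an initial encoder policy $\boldsymbol{\pi}_{\text{e}}^0$, alternately compute the decoder's best response to the current encoder policy (policy iteration over $\langle\Delta,s\rangle$, with the decoder's belief computed by Bayesian updating that conditions on the encoder not having transmitted) and the encoder's best response to the current decoder policy (policy iteration on the MDP with state $\langle s_t,\Delta_t,s_{t-\Delta_t}\rangle$), until neither policy changes; the output is $\boldsymbol{\pi}^{\text{API}}_{\text{push}}(\beta\mid\boldsymbol{\pi}_{\text{e}}^0)$. *)

theory Defs
  imports Complex_Main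
begin

record inst =
  St   :: "nat set"
  Ac   :: "nat set"
  Pr   :: "nat \<Rightarrow> nat \<Rightarrow> nat \<Rightarrow> real"  (* Pr I a s s' = P^a_{s,s'} *)
  rew  :: "nat \<Rightarrow> nat \<Rightarrow> nat \<Rightarrow> real"  (* rew I s s' a = r_{s,s'}(a) *)
  gam  :: real
  cost :: real
  mu0  :: "nat \<Rightarrow> real"
  Tmax :: nat

definition valid_inst :: "inst \<Rightarrow> bool" where
  "valid_inst I \<longleftrightarrow>
     finite (St I) \<and> St I \<noteq> {} \<and> finite (Ac I) \<and> Ac I \<noteq> {} \<and>
     (\<forall>a\<in>Ac I. \<forall>s\<in>St I. (\<forall>s'. 0 \<le> Pr I a s s') \<and> (\<Sum>s'\<in>St I. Pr I a s s') = 1) \<and>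
     0 \<le> gam I \<and> gam I < 1 \<and> 0 < cost I \<and>
     (\<forall>s. 0 \<le> mu0 I s) \<and> (\<Sum>s\<in>St I. mu0 I s) = 1"

(* Encoder policy: c_t = e s_t delta z, where s_t is the current state, delta = Delta_{t-1}+1
   is the age the decoder's information would have if nothing is sent at time t, and
   z = s_{t-1-Delta_{t-1}} is the last transmitted state.  True = transmit. *)
type_synonym enc = "nat \<Rightarrow> nat \<Rightarrow> nat \<Rightarrow> bool"
(* Decoder policy: a_t = d Delta_t s_{t-Delta_t}. *)
type_synonym dec = "nat \<Rightarrow> nat \<Rightarrow> nat"

definition X :: "inst \<Rightarrow> (nat \<times> nat \<times> nat) set" where
  "X I = St I \<times> {1..Tmax I + 1} \<times> St I"

(* Transmission is forced when otherwise Delta_t would exceed T_max. *)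
definition txc :: "inst \<Rightarrow> nat \<Rightarrow> bool \<Rightarrow> bool" where
  "txc I delta c \<longleftrightarrow> Tmax I < delta \<or> c"

definition age :: "inst \<Rightarrow> nat \<Rightarrow> bool \<Rightarrow> nat" where
  "age I delta c = (if txc I delta c then 0 else delta)"

definition last :: "inst \<Rightarrow> nat \<Rightarrow> nat \<Rightarrow> nat \<Rightarrow> bool \<Rightarrow> nat" where
  "last I s delta z c = (if txc I delta c then s else z)"

definition actn :: "inst \<Rightarrow> dec \<Rightarrow> nat \<Rightarrow> nat \<Rightarrow> nat \<Rightarrow> bool \<Rightarrow> nat" where
  "actn I d s delta z c = d (age I delta c) (last I s delta z c)"

definition gstage :: "inst \<Rightarrow> dec \<Rightarrow> nat \<times> nat \<times> nat \<Rightarrow> bool \<Rightarrow> real" where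
  "gstage I d x c = (case x of (s, delta, z) \<Rightarrow>
     (\<Sum>s'\<in>St I. Pr I (actn I d s delta z c) s s' * rew I s s' (actn I d s delta z c))
     - (if txc I delta c then cost I else 0))"

definition kern :: "inst \<Rightarrow> dec \<Rightarrow> nat \<times> nat \<times> nat \<Rightarrow> bool \<Rightarrow> nat \<times> nat \<times> nat \<Rightarrow> real" where
  "kern I d x c y = (case x of (s, delta, z) \<Rightarrow> case y of (s', delta', z') \<Rightarrow>
     (if delta' = age I delta c + 1 \<and> z' = last I s delta z c
      then Pr I (actn I d s delta z c) s s' else 0))"

(* distribution of the extended state at time t under the joint policy (e, d);
   at time 0 the age is T_max+1, which forces the initial transmission *)
fun dist :: "inst \<Rightarrow> enc \<Rightarrow> dec \<Rightarrow> nat \<Rightarrow> nat \<times> nat \<times> nat \<Rightarrow> real" where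
  "dist I e d 0 y = (case y of (s, delta, z) \<Rightarrow>
      (if delta = Tmax I + 1 \<and> z = s then mu0 I s else 0))"
| "dist I e d (Suc t) y =
      (\<Sum>x\<in>X I. dist I e d t x * kern I d x (case x of (s, delta, z) \<Rightarrow> e s delta z) y)"

definition Ret :: "inst \<Rightarrow> enc \<Rightarrow> dec \<Rightarrow> real" where
  "Ret I e d = (\<Sum>t. gam I ^ t *
     (\<Sum>x\<in>X I. dist I e d t x * gstage I d x (case x of (s, delta, z) \<Rightarrow> e s delta z)))"

definition valid_dec :: "inst \<Rightarrow> dec \<Rightarrow> bool" where
  "valid_dec I d \<longleftrightarrow> (\<forall>D\<le>Tmax I. \<forall>z\<in>St I. d D z \<in> Ac I)"

definition enc_eq :: "inst \<Rightarrow> enc \<Rightarrow> enc \<Rightarrow> bool" where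
  "enc_eq I e e' \<longleftrightarrow> (\<forall>s\<in>St I. \<forall>delta\<in>{1..Tmax I}. \<forall>z\<in>St I. e s delta z = e' s delta z)"

definition dec_eq :: "inst \<Rightarrow> dec \<Rightarrow> dec \<Rightarrow> bool" where
  "dec_eq I d d' \<longleftrightarrow> (\<forall>D\<le>Tmax I. \<forall>z\<in>St I. d D z = d' D z)"

definition dec_br :: "inst \<Rightarrow> enc \<Rightarrow> dec \<Rightarrow> bool" where
  "dec_br I e d \<longleftrightarrow> valid_dec I d \<and> (\<forall>d'. valid_dec I d' \<longrightarrow> Ret I e d' \<le> Ret I e d)"

definition qv :: "inst \<Rightarrow> dec \<Rightarrow> (nat \<times> nat \<times> nat \<Rightarrow> real) \<Rightarrow> nat \<times> nat \<times> nat \<Rightarrow> bool \<Rightarrow> real" where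
  "qv I d V x c = gstage I d x c + gam I * (\<Sum>y\<in>X I. kern I d x c y * V y)"

(* Encoder best response to decoder d: an optimal policy of the encoder MDP, i.e. greedy
   w.r.t. the optimal value function (the fixed point of the Bellman optimality operator),
   which is what policy iteration returns. *)
definition enc_br :: "inst \<Rightarrow> dec \<Rightarrow> enc \<Rightarrow> bool" where
  "enc_br I d e \<longleftrightarrow> (\<exists>V. (\<forall>x\<in>X I. V x = max (qv I d V x True) (qv I d V x False)) \<and>
                        (\<forall>x\<in>X I. qv I d V x (case x of (s, delta, z) \<Rightarrow> e s delta z) = V x))"

(* Alternating Policy Iteration started from e0: rounds k = 0,1,...: d_k is a decoder best
   response to e_k, then e_{k+1} is an encoder best response to d_k; the scheme stops after
   the first round n \<ge> 1 in which neither policy changed; output (e_{n+1}, d_n). *)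
definition api_output :: "inst \<Rightarrow> enc \<Rightarrow> enc \<Rightarrow> dec \<Rightarrow> bool" where
  "api_output I e0 e d \<longleftrightarrow>
     (\<exists>es ds n. es 0 = e0 \<and> 1 \<le> n \<and>
        (\<forall>k\<le>n. dec_br I (es k) (ds k) \<and> enc_br I (ds k) (es (Suc k))) \<and>
        (\<forall>k. 1 \<le> k \<and> k < n \<longrightarrow> \<not> (dec_eq I (ds k) (ds (k - 1)) \<and> enc_eq I (es (Suc k)) (es k))) \<and>
        dec_eq I (ds n) (ds (n - 1)) \<and> enc_eq I (es (Suc n)) (es n) \<and>
        e = es (Suc n) \<and> d = ds n)"

(* Periodic encoder with period tau: transmit exactly when the age would exceed tau,
   so Delta_t = t mod (tau+1). *)
definition per_enc :: "nat \<Rightarrow> enc" where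
  "per_enc tau = (\<lambda>s delta z. tau < delta)"

definition per_opt :: "inst \<Rightarrow> nat \<Rightarrow> dec \<Rightarrow> bool" where
  "per_opt I tau d \<longleftrightarrow> tau \<le> Tmax I \<and> valid_dec I d \<and>
     (\<forall>tau' d'. tau' \<le> Tmax I \<and> valid_dec I d' \<longrightarrow> Ret I (per_enc tau') d' \<le> Ret I (per_enc tau) d)"

end

theory Submission
  imports Defs
begin

(* Counterexample: two states whose transitions are uniform whatever the action, rewards
   r(0,a) = 2, 0 and r(1,a) = 3, 4 for a = 0, 1, discount 4/5, communication cost 2 and
   T_max = 1.  Start API from the encoder that, at age 1, transmits only when the state is 0
   while the last transmitted state was 1.  Against it the decoder's best response plays the
   last transmitted state (after a transmitted 1, silence reveals that the state is 1), and
   against that decoder the same encoder is the unique greedy policy, so API stops at once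
   with return 400/49, whereas transmitting every other step earns 25/3.
   Returns are evaluated through discounted occupation measures; encoder best responses are
   pinned down because the Bellman optimality operator is a gamma-contraction, whose fixed
   point is unique. *)

definition push :: "'a set \<Rightarrow> ('a \<Rightarrow> 'a \<Rightarrow> real) \<Rightarrow> ('a \<Rightarrow> real) \<Rightarrow> 'a \<Rightarrow> real" where
  "push A K m y = (\<Sum>x\<in>A. m x * K x y)"

lemma sum_abs_push_le:
  assumes K_nonneg: "\<And>x y. x \<in> A \<Longrightarrow> y \<in> A \<Longrightarrow> 0 \<le> K x y"
    and K_sum: "\<And>x. x \<in> A \<Longrightarrow> (\<Sum>y\<in>A. K x y) = 1"
  shows "(\<Sum>y\<in>A. \<bar>push A K m y\<bar>) \<le> (\<Sum>x\<in>A. \<bar>m x\<bar>)"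
proof -
  have "(\<Sum>y\<in>A. \<bar>push A K m y\<bar>) \<le> (\<Sum>y\<in>A. \<Sum>x\<in>A. \<bar>m x\<bar> * K x y)"
    unfolding push_def
    by (intro sum_mono order.trans[OF sum_abs]) (simp add: abs_mult K_nonneg)
  also have "\<dots> = (\<Sum>x\<in>A. \<bar>m x\<bar> * (\<Sum>y\<in>A. K x y))"
    unfolding sum_distrib_left by (rule sum.swap)
  also have "\<dots> = (\<Sum>x\<in>A. \<bar>m x\<bar>)"
    by (simp add: K_sum)
  finally show ?thesis .
qed

lemma sum_abs_funpow_push_le:
  assumes "\<And>x y. x \<in> A \<Longrightarrow> y \<in> A \<Longrightarrow> 0 \<le> K x y"
    and "\<And>x. x \<in> A \<Longrightarrow> (\<Sum>y\<in>A. K x y) = 1"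
  shows "(\<Sum>x\<in>A. \<bar>(push A K ^^ N) m x\<bar>) \<le> (\<Sum>x\<in>A. \<bar>m x\<bar>)"
proof (induction N)
  case (Suc N)
  then show ?case
    using sum_abs_push_le[of A K "(push A K ^^ N) m", OF assms] by simp
qed simp

lemma discounted_partial_sums:
  fixes D :: "nat \<Rightarrow> 'a \<Rightarrow> real"
  assumes D_Suc: "\<And>t. D (Suc t) = push A K (D t)"
    and nu: "\<And>y. y \<in> A \<Longrightarrow> nu y = D 0 y + c * push A K nu y"
  shows "(\<Sum>t<N. c ^ t * (\<Sum>x\<in>A. D t x * g x))
    = (\<Sum>x\<in>A. nu x * g x) - c ^ N * (\<Sum>x\<in>A. (push A K ^^ N) nu x * g x)"
proof -
  define mu where "mu N = (push A K ^^ N) nu" for N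
  have mu_Suc: "mu (Suc N) y = (\<Sum>x\<in>A. mu N x * K x y)" for N y
    by (simp add: mu_def push_def)
  have mu_split: "mu N y = D N y + c * mu (Suc N) y" if "y \<in> A" for N y
    using that
  proof (induction N arbitrary: y)
    case 0
    then show ?case by (simp add: mu_def nu)
  next
    case (Suc N)
    have "mu (Suc N) y = (\<Sum>x\<in>A. mu N x * K x y)"
      by (rule mu_Suc)
    also have "\<dots> = (\<Sum>x\<in>A. (D N x + c * mu (Suc N) x) * K x y)"
      using Suc.IH by (intro sum.cong) auto
    also have "\<dots> = D (Suc N) y + c * mu (Suc (Suc N)) y"
      by (simp add: D_Suc mu_Suc[of "Suc N"] push_def distrib_right sum.distrib
          sum_distrib_left mult.assoc)
    finally show ?case .
  qed
  show ?thesis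
    unfolding mu_def[symmetric]
  proof (induction N)
    case (Suc N)
    have "(\<Sum>x\<in>A. mu N x * g x) = (\<Sum>x\<in>A. (D N x + c * mu (Suc N) x) * g x)"
      using mu_split[where N = N] by (intro sum.cong) auto
    also have "\<dots> = (\<Sum>x\<in>A. D N x * g x) + c * (\<Sum>x\<in>A. mu (Suc N) x * g x)"
      by (simp add: distrib_right sum.distrib sum_distrib_left mult.assoc)
    finally show ?case
      using Suc.IH by (simp add: algebra_simps)
  qed (simp add: mu_def)
qed

lemma discounted_sums_occupation:
  fixes D :: "nat \<Rightarrow> 'a \<Rightarrow> real" and K :: "'a \<Rightarrow> 'a \<Rightarrow> real"
  assumes fin: "finite A"
    and D_Suc: "\<And>t y. D (Suc t) y = (\<Sum>x\<in>A. D t x * K x y)"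
    and K_nonneg: "\<And>x y. x \<in> A \<Longrightarrow> y \<in> A \<Longrightarrow> 0 \<le> K x y"
    and K_sum: "\<And>x. x \<in> A \<Longrightarrow> (\<Sum>y\<in>A. K x y) = 1"
    and nu: "\<And>y. y \<in> A \<Longrightarrow> nu y = D 0 y + c * (\<Sum>x\<in>A. nu x * K x y)"
    and c: "\<bar>c\<bar> < 1"
  shows "(\<lambda>t. c ^ t * (\<Sum>x\<in>A. D t x * g x)) sums (\<Sum>x\<in>A. nu x * g x)"
proof -
  define mu where "mu N = (push A K ^^ N) nu" for N
  define B where "B = (\<Sum>x\<in>A. \<bar>nu x\<bar>) * (\<Sum>x\<in>A. \<bar>g x\<bar>)"
  have tail_bound: "\<bar>\<Sum>x\<in>A. mu N x * g x\<bar> \<le> B" for N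
  proof -
    have "\<bar>\<Sum>x\<in>A. mu N x * g x\<bar> \<le> (\<Sum>x\<in>A. \<bar>mu N x\<bar> * (\<Sum>x\<in>A. \<bar>g x\<bar>))"
      using fin by (intro order.trans[OF sum_abs] sum_mono)
        (auto simp: abs_mult intro!: mult_left_mono member_le_sum)
    also have "\<dots> \<le> B"
      unfolding sum_distrib_right[symmetric] B_def mu_def
      by (intro mult_right_mono sum_abs_funpow_push_le K_nonneg K_sum sum_nonneg) auto
    finally show ?thesis .
  qed
  have "(\<lambda>N. c ^ N * (\<Sum>x\<in>A. mu N x * g x)) \<longlonglongrightarrow> 0"
  proof (rule tendsto_0_le[OF LIMSEQ_power_zero always_eventually])
    show "norm c < 1"
      using c by simp
    show "\<forall>N. norm (c ^ N * (\<Sum>x\<in>A. mu N x * g x)) \<le> norm (c ^ N) * B"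
      by (simp add: abs_mult mult_left_mono tail_bound)
  qed
  then have "(\<lambda>N. (\<Sum>x\<in>A. nu x * g x) - c ^ N * (\<Sum>x\<in>A. mu N x * g x))
      \<longlonglongrightarrow> (\<Sum>x\<in>A. nu x * g x) - 0"
    by (intro tendsto_diff tendsto_const)
  moreover have "(\<Sum>t<N. c ^ t * (\<Sum>x\<in>A. D t x * g x))
      = (\<Sum>x\<in>A. nu x * g x) - c ^ N * (\<Sum>x\<in>A. mu N x * g x)" for N
    unfolding mu_def using D_Suc nu
    by (intro discounted_partial_sums) (simp_all add: push_def fun_eq_iff)
  ultimately show ?thesis
    by (simp add: sums_def)
qed

lemma bellman_fixpoint_unique:
  fixes q :: "('a \<Rightarrow> real) \<Rightarrow> 'a \<Rightarrow> bool \<Rightarrow> real" and K :: "'a \<Rightarrow> bool \<Rightarrow> 'a \<Rightarrow> real"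
  assumes fin: "finite A"
    and q_diff: "\<And>V W x b. x \<in> A \<Longrightarrow> q V x b - q W x b = c * (\<Sum>y\<in>A. K x b y * (V y - W y))"
    and K_nonneg: "\<And>x b y. x \<in> A \<Longrightarrow> y \<in> A \<Longrightarrow> 0 \<le> K x b y"
    and K_sum: "\<And>x b. x \<in> A \<Longrightarrow> (\<Sum>y\<in>A. K x b y) = 1"
    and c: "0 \<le> c" "c < 1"
    and V: "\<forall>x\<in>A. V x = max (q V x True) (q V x False)"
    and W: "\<forall>x\<in>A. W x = max (q W x True) (q W x False)"
    and x: "x \<in> A"
  shows "V x = W x"
proof -
  define M where "M = Max ((\<lambda>x. \<bar>V x - W x\<bar>) ` A)"
  have le_M: "\<bar>V y - W y\<bar> \<le> M" if "y \<in> A" for y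
    unfolding M_def using fin that by (intro Max_ge) auto
  have q_close: "\<bar>q V y b - q W y b\<bar> \<le> c * M" if y: "y \<in> A" for y b
  proof -
    have "\<bar>\<Sum>z\<in>A. K y b z * (V z - W z)\<bar> \<le> (\<Sum>z\<in>A. K y b z * M)"
      using K_nonneg[OF y] le_M
      by (intro order.trans[OF sum_abs] sum_mono) (simp add: abs_mult mult_left_mono)
    also have "\<dots> = M"
      by (simp add: K_sum[OF y] sum_distrib_right[symmetric])
    finally show ?thesis
      using c by (simp add: q_diff[OF y] abs_mult mult_left_mono)
  qed
  have contracted: "\<bar>V y - W y\<bar> \<le> c * M" if y: "y \<in> A" for y
    using q_close[OF y, of True] q_close[OF y, of False] V W y
    by (auto simp: max_def abs_le_iff)
  have "M \<in> (\<lambda>x. \<bar>V x - W x\<bar>) ` A"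
    unfolding M_def using fin x by (intro Max_in) auto
  then have "M \<le> c * M"
    using contracted by auto
  then have "M \<le> 0"
    using c by (simp add: mult_le_cancel_right1 not_le)
  then show ?thesis
    using le_M[OF x] by simp
qed

abbreviation enc_at :: "enc \<Rightarrow> nat \<times> nat \<times> nat \<Rightarrow> bool" where
  "enc_at e x \<equiv> case x of (s, delta, z) \<Rightarrow> e s delta z"

lemma finite_X: "valid_inst I \<Longrightarrow> finite (X I)"
  by (simp add: valid_inst_def X_def)

lemma actn_in_Ac:
  assumes "valid_dec I d" and "(s, delta, z) \<in> X I"
  shows "actn I d s delta z c \<in> Ac I"
  using assms by (auto simp: valid_dec_def X_def actn_def age_def last_def txc_def)

lemma kern_nonneg:
  assumes "valid_inst I" "valid_dec I d" "x \<in> X I"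
  shows "0 \<le> kern I d x c y"
  using assms actn_in_Ac[OF assms(2)] by (auto simp: valid_inst_def X_def kern_def split: prod.splits)

lemma kern_sum_eq_1:
  assumes I: "valid_inst I" and d: "valid_dec I d" and x: "x \<in> X I"
  shows "(\<Sum>y\<in>X I. kern I d x c y) = 1"
proof -
  obtain s delta z where x_eq: "x = (s, delta, z)"
    by (cases x) auto
  define a where "a = actn I d s delta z c"
  define next_obs where "next_obs = (age I delta c + 1, last I s delta z c)"
  have next_obs_in: "next_obs \<in> {1..Tmax I + 1} \<times> St I"
    using x by (auto simp: next_obs_def x_eq X_def age_def last_def txc_def)
  have "(\<Sum>y\<in>X I. kern I d x c y)
      = (\<Sum>(s', obs)\<in>St I \<times> ({1..Tmax I + 1} \<times> St I). if obs = next_obs then Pr I a s s' else 0)"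
    unfolding X_def by (intro sum.cong) (auto simp: x_eq kern_def a_def next_obs_def)
  also have "\<dots> = (\<Sum>s'\<in>St I. \<Sum>obs\<in>{1..Tmax I + 1} \<times> St I. if obs = next_obs then Pr I a s s' else 0)"
    by (rule sum.cartesian_product[symmetric])
  also have "\<dots> = (\<Sum>s'\<in>St I. Pr I a s s')"
    using I next_obs_in by (simp add: valid_inst_def X_def)
  also have "\<dots> = 1"
    using I actn_in_Ac[OF d, of s delta z c] x by (simp add: valid_inst_def a_def x_eq X_def)
  finally show ?thesis .
qed

lemma Ret_eq_occupation:
  assumes I: "valid_inst I" and d: "valid_dec I d"
    and nu: "\<forall>y\<in>X I. nu y = dist I e d 0 y + gam I * (\<Sum>x\<in>X I. nu x * kern I d x (enc_at e x) y)"
  shows "Ret I e d = (\<Sum>x\<in>X I. nu x * gstage I d x (enc_at e x))"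
proof -
  have "(\<lambda>t. gam I ^ t * (\<Sum>x\<in>X I. dist I e d t x * gstage I d x (enc_at e x)))
      sums (\<Sum>x\<in>X I. nu x * gstage I d x (enc_at e x))"
    using I nu
    by (intro discounted_sums_occupation[where K = "\<lambda>x. kern I d x (enc_at e x)"])
       (auto simp: finite_X kern_nonneg[OF I d] kern_sum_eq_1[OF I d] valid_inst_def)
  then show ?thesis
    unfolding Ret_def by (rule sums_unique[symmetric])
qed

lemma qv_diff:
  "qv I d V x c - qv I d W x c = gam I * (\<Sum>y\<in>X I. kern I d x c y * (V y - W y))"
  by (simp add: qv_def right_diff_distrib sum_subtractf)

lemma bellman_qv_unique:
  assumes I: "valid_inst I" and d: "valid_dec I d"
    and V: "\<forall>x\<in>X I. V x = max (qv I d V x True) (qv I d V x False)"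
    and W: "\<forall>x\<in>X I. W x = max (qv I d W x True) (qv I d W x False)"
    and x: "x \<in> X I"
  shows "V x = W x"
proof (rule bellman_fixpoint_unique[where q = "qv I d" and K = "kern I d" and c = "gam I"])
  show "finite (X I)"
    using I by (rule finite_X)
  show "qv I d V x b - qv I d W x b = gam I * (\<Sum>y\<in>X I. kern I d x b y * (V y - W y))" for V W x b
    by (rule qv_diff)
  show "0 \<le> kern I d x b y" if "x \<in> X I" for x b y
    using I d that by (rule kern_nonneg)
  show "(\<Sum>y\<in>X I. kern I d x b y) = 1" if "x \<in> X I" for x b
    using I d that by (rule kern_sum_eq_1)
  show "0 \<le> gam I" "gam I < 1"
    using I by (simp_all add: valid_inst_def)
qed (fact V W x)+

lemma enc_br_greedy:
  assumes I: "valid_inst I" and d: "valid_dec I d" and br: "enc_br I d e"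
    and V: "\<forall>x\<in>X I. V x = max (qv I d V x True) (qv I d V x False)"
    and x: "x \<in> X I"
  shows "qv I d V x (enc_at e x) = V x"
proof -
  obtain W where W: "\<forall>x\<in>X I. W x = max (qv I d W x True) (qv I d W x False)"
    and greedy: "\<forall>x\<in>X I. qv I d W x (enc_at e x) = W x"
    using br unfolding enc_br_def by blast
  have W_eq_V: "\<forall>y\<in>X I. W y = V y"
    using bellman_qv_unique[OF I d W V] by blast
  then have "qv I d W x b = qv I d V x b" for b
    unfolding qv_def by (metis (no_types, lifting) sum.cong)
  then show ?thesis
    using greedy x W_eq_V by metis
qed

definition cex_rew :: "nat \<Rightarrow> nat \<Rightarrow> real" where
  "cex_rew s a = (if s = 0 then (if a = 0 then 2 else 0) else (if a = 0 then 3 else 4))"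

definition cex :: inst where
  "cex = \<lparr>St = {0, 1}, Ac = {0, 1}, Pr = (\<lambda>a s s'. 1/2), rew = (\<lambda>s s' a. cex_rew s a),
          gam = 4/5, cost = 2, mu0 = (\<lambda>s. 1/2), Tmax = 1\<rparr>"

definition cex_enc :: enc where
  "cex_enc = (\<lambda>s delta z. s = 0 \<and> z = 1)"

definition cex_dec :: dec where
  "cex_dec = (\<lambda>D z. z)"

definition per_dec :: dec where
  "per_dec = (\<lambda>D z. if D = 0 then z else 0)"

lemma cex_simps [simp]:
  "St cex = {0, 1}" "Ac cex = {0, 1}" "Pr cex a s s' = 1/2" "rew cex s s' a = cex_rew s a"
  "gam cex = 4/5" "cost cex = 2" "mu0 cex s = 1/2" "Tmax cex = 1"
  by (simp_all add: cex_def)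

lemma valid_cex: "valid_inst cex"
  by (simp add: valid_inst_def)

lemma X_cex: "X cex = {(0,1,0), (0,1,1), (0,2,0), (0,2,1), (1,1,0), (1,1,1), (1,2,0), (1,2,1)}"
proof -
  have "{1..Tmax cex + 1} = {1, 2}"
    by auto
  then show ?thesis
    unfolding X_def by auto
qed

lemma sum_X_cex:
  "(\<Sum>x\<in>X cex. f x) = f (0,1,0) + f (0,1,1) + f (0,2,0) + f (0,2,1)
     + f (1,1,0) + f (1,1,1) + f (1,2,0) + f (1,2,1)"
  by (simp add: X_cex add.assoc)

lemma ball_X_cex:
  "(\<forall>x\<in>X cex. P x) \<longleftrightarrow> P (0,1,0) \<and> P (0,1,1) \<and> P (0,2,0) \<and> P (0,2,1)
     \<and> P (1,1,0) \<and> P (1,1,1) \<and> P (1,2,0) \<and> P (1,2,1)"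
  by (simp add: X_cex)

lemma all_le_one_nat: "(\<forall>D\<le>Suc 0. P D) \<longleftrightarrow> P 0 \<and> P 1"
  by (auto simp: le_Suc_eq)

lemma valid_dec_cex_iff:
  "valid_dec cex d \<longleftrightarrow> d 0 0 \<in> {0, 1} \<and> d 0 1 \<in> {0, 1} \<and> d 1 0 \<in> {0, 1} \<and> d 1 1 \<in> {0, 1}"
  by (simp add: valid_dec_def all_le_one_nat)

lemma dec_eq_cex_dec_iff:
  "dec_eq cex d cex_dec \<longleftrightarrow> d 0 0 = 0 \<and> d 0 1 = 1 \<and> d 1 0 = 0 \<and> d 1 1 = 1"
  by (simp add: dec_eq_def cex_dec_def all_le_one_nat)

lemma enc_eq_cex_enc_iff:
  "enc_eq cex e cex_enc \<longleftrightarrow> \<not> e 0 1 0 \<and> e 0 1 1 \<and> \<not> e 1 1 0 \<and> \<not> e 1 1 1"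
  by (simp add: enc_eq_def cex_enc_def)

lemma Ret_cex_enc:
  assumes e: "enc_eq cex e cex_enc" and d: "valid_dec cex d"
  shows "Ret cex e d = 5/7 * (cex_rew 0 (d 1 0) + cex_rew 1 (d 1 0)) + 25/49 * cex_rew 1 (d 1 1)
    + 25/14 * (cex_rew 0 (d 0 0) - 2) + 125/98 * (cex_rew 1 (d 0 1) - 2)"
proof -
  (* the discounted occupation measure, obtained by solving the linear system of
     Ret_eq_occupation *)
  define nu :: "nat \<times> nat \<times> nat \<Rightarrow> real" where
    "nu x = (case x of (s, delta, z) \<Rightarrow> if delta = 1 then (if z = 0 then 5/7 else 25/49)
       else if s = 0 then (if z = 0 then 15/14 else 10/49) else (if z = 0 then 4/7 else 69/98))" for x
  have e': "\<not> e 0 1 0" "e 0 1 1" "\<not> e 1 1 0" "\<not> e 1 1 1"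
    using e by (simp_all add: enc_eq_cex_enc_iff)
  have "Ret cex e d = (\<Sum>x\<in>X cex. nu x * gstage cex d x (enc_at e x))"
    by (rule Ret_eq_occupation[OF valid_cex d], unfold ball_X_cex sum_X_cex)
       (simp add: nu_def kern_def age_def last_def txc_def e'[unfolded One_nat_def])
  also have "\<dots> = 5/7 * (cex_rew 0 (d 1 0) + cex_rew 1 (d 1 0)) + 25/49 * cex_rew 1 (d 1 1)
    + 25/14 * (cex_rew 0 (d 0 0) - 2) + 125/98 * (cex_rew 1 (d 0 1) - 2)"
    unfolding sum_X_cex
    by (simp add: nu_def gstage_def actn_def age_def last_def txc_def e'[unfolded One_nat_def] field_simps)
  finally show ?thesis .
qed

lemma Ret_cex_enc_le:
  assumes "enc_eq cex e cex_enc" and d: "valid_dec cex d"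
  shows "Ret cex e d \<le> 400/49"
  using d unfolding valid_dec_cex_iff by (auto simp: Ret_cex_enc[OF assms] cex_rew_def)

lemma Ret_cex_enc_eq_iff:
  assumes "enc_eq cex e cex_enc" and d: "valid_dec cex d"
  shows "Ret cex e d = 400/49 \<longleftrightarrow> dec_eq cex d cex_dec"
  using d unfolding valid_dec_cex_iff dec_eq_cex_dec_iff
  by (auto simp: Ret_cex_enc[OF assms] cex_rew_def)

lemma valid_cex_dec: "valid_dec cex cex_dec"
  by (simp add: valid_dec_cex_iff cex_dec_def)

lemma dec_br_cex_enc_iff:
  assumes e: "enc_eq cex e cex_enc"
  shows "dec_br cex e d \<longleftrightarrow> valid_dec cex d \<and> dec_eq cex d cex_dec"
proof -
  have opt: "Ret cex e cex_dec = 400/49"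
    using Ret_cex_enc_eq_iff[OF e valid_cex_dec] by (simp add: dec_eq_def)
  show ?thesis
    unfolding dec_br_def
    using Ret_cex_enc_le[OF e] Ret_cex_enc_eq_iff[OF e] valid_cex_dec opt
    by (metis order.antisym)
qed

definition cex_value :: "nat \<times> nat \<times> nat \<Rightarrow> real" where
  "cex_value x = (case x of (s, delta, z) \<Rightarrow>
     if delta = 1 then (if s = 0 then (if z = 0 then 418/49 else 354/49) else (if z = 0 then 467/49 else 516/49))
     else (if s = 0 then 354/49 else 446/49))"

lemma qv_cex_value:
  assumes "dec_eq cex d cex_dec"
  shows "qv cex d cex_value (0,1,0) True = 354/49" "qv cex d cex_value (0,1,0) False = 418/49"
    "qv cex d cex_value (0,1,1) True = 354/49" "qv cex d cex_value (0,1,1) False = 320/49"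
    "qv cex d cex_value (1,1,0) True = 446/49" "qv cex d cex_value (1,1,0) False = 467/49"
    "qv cex d cex_value (1,1,1) True = 446/49" "qv cex d cex_value (1,1,1) False = 516/49"
    "qv cex d cex_value (0,2,z) c = 354/49" "qv cex d cex_value (1,2,z) c = 446/49"
  using assms unfolding qv_def sum_X_cex dec_eq_cex_dec_iff
  by (simp_all add: gstage_def kern_def actn_def age_def last_def txc_def cex_value_def cex_rew_def)

lemma cex_value_bellman:
  assumes "dec_eq cex d cex_dec"
  shows "\<forall>x\<in>X cex. cex_value x = max (qv cex d cex_value x True) (qv cex d cex_value x False)"
  unfolding ball_X_cex by (simp add: qv_cex_value[OF assms, unfolded One_nat_def] cex_value_def)

lemma enc_br_cex_dec:
  assumes d: "valid_dec cex d" "dec_eq cex d cex_dec" and br: "enc_br cex d e"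
  shows "enc_eq cex e cex_enc"
proof -
  have greedy: "qv cex d cex_value x (enc_at e x) = cex_value x" if "x \<in> X cex" for x
    using enc_br_greedy[OF valid_cex d(1) br cex_value_bellman[OF d(2)] that] .
  note qv_vals = qv_cex_value[OF d(2), unfolded One_nat_def]
  have "\<not> e 0 1 0"
    using greedy[of "(0,1,0)"] by (cases "e 0 1 0") (simp_all add: X_cex cex_value_def qv_vals)
  moreover have "e 0 1 1"
    using greedy[of "(0,1,1)"] by (cases "e 0 1 1") (simp_all add: X_cex cex_value_def qv_vals)
  moreover have "\<not> e 1 1 0"
    using greedy[of "(1,1,0)"] by (cases "e 1 1 0") (simp_all add: X_cex cex_value_def qv_vals)
  moreover have "\<not> e 1 1 1"
    using greedy[of "(1,1,1)"] by (cases "e 1 1 1") (simp_all add: X_cex cex_value_def qv_vals)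
  ultimately show ?thesis
    by (simp add: enc_eq_cex_enc_iff)
qed

lemma enc_br_cex_enc: "enc_br cex cex_dec cex_enc"
proof -
  have d: "dec_eq cex cex_dec cex_dec"
    by (simp add: dec_eq_def)
  show ?thesis
    unfolding enc_br_def
    by (intro exI[of _ cex_value] conjI cex_value_bellman[OF d])
       (simp add: ball_X_cex cex_enc_def qv_cex_value[OF d, unfolded One_nat_def] cex_value_def)
qed

lemma Ret_per_enc_0:
  assumes d: "valid_dec cex d"
  shows "Ret cex (per_enc 0) d = 5/2 * (cex_rew 0 (d 0 0) - 2) + 5/2 * (cex_rew 1 (d 0 1) - 2)"
proof -
  define nu :: "nat \<times> nat \<times> nat \<Rightarrow> real" where
    "nu x = (case x of (s, delta, z) \<Rightarrow> if delta = 1 then 1 else if s = z then 1/2 else 0)" for x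
  have "Ret cex (per_enc 0) d = (\<Sum>x\<in>X cex. nu x * gstage cex d x (enc_at (per_enc 0) x))"
    by (rule Ret_eq_occupation[OF valid_cex d], unfold ball_X_cex sum_X_cex)
       (simp add: nu_def kern_def age_def last_def txc_def per_enc_def)
  also have "\<dots> = 5/2 * (cex_rew 0 (d 0 0) - 2) + 5/2 * (cex_rew 1 (d 0 1) - 2)"
    unfolding sum_X_cex by (simp add: nu_def gstage_def actn_def age_def last_def txc_def per_enc_def field_simps)
  finally show ?thesis .
qed

lemma Ret_per_enc_1:
  assumes d: "valid_dec cex d"
  shows "Ret cex (per_enc 1) d = 5/9 * (cex_rew 0 (d 1 0) + cex_rew 1 (d 1 0))
    + 5/9 * (cex_rew 0 (d 1 1) + cex_rew 1 (d 1 1))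
    + 25/18 * (cex_rew 0 (d 0 0) - 2) + 25/18 * (cex_rew 1 (d 0 1) - 2)"
proof -
  define nu :: "nat \<times> nat \<times> nat \<Rightarrow> real" where
    "nu x = (case x of (s, delta, z) \<Rightarrow> if delta = 1 then 5/9 else if s = z then 17/18 else 4/9)" for x
  have "Ret cex (per_enc 1) d = (\<Sum>x\<in>X cex. nu x * gstage cex d x (enc_at (per_enc 1) x))"
    by (rule Ret_eq_occupation[OF valid_cex d], unfold ball_X_cex sum_X_cex)
       (simp add: nu_def kern_def age_def last_def txc_def per_enc_def)
  also have "\<dots> = 5/9 * (cex_rew 0 (d 1 0) + cex_rew 1 (d 1 0))
    + 5/9 * (cex_rew 0 (d 1 1) + cex_rew 1 (d 1 1))
    + 25/18 * (cex_rew 0 (d 0 0) - 2) + 25/18 * (cex_rew 1 (d 0 1) - 2)"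
    unfolding sum_X_cex by (simp add: nu_def gstage_def actn_def age_def last_def txc_def per_enc_def field_simps)
  finally show ?thesis .
qed

lemma valid_per_dec: "valid_dec cex per_dec"
  by (simp add: valid_dec_cex_iff per_dec_def)

lemma Ret_per_dec: "Ret cex (per_enc 1) per_dec = 25/3"
  unfolding Ret_per_enc_1[OF valid_per_dec] by (simp add: per_dec_def cex_rew_def)

lemma per_opt_cex: "per_opt cex 1 per_dec"
  unfolding per_opt_def
proof (intro conjI allI impI valid_per_dec)
  fix tau d assume "tau \<le> Tmax cex \<and> valid_dec cex d"
  then have tau: "tau = 0 \<or> tau = 1" and d: "valid_dec cex d"
    by auto
  have "Ret cex (per_enc 0) d \<le> 5" "Ret cex (per_enc 1) d \<le> 25/3"
    unfolding Ret_per_enc_0[OF d] Ret_per_enc_1[OF d]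
    using d unfolding valid_dec_cex_iff by (auto simp: cex_rew_def)
  then show "Ret cex (per_enc tau) d \<le> Ret cex (per_enc 1) per_dec"
    using tau Ret_per_dec by auto
qed simp

lemma api_output_cex:
  assumes "api_output cex cex_enc e d"
  shows "enc_eq cex e cex_enc" and "valid_dec cex d"
proof -
  obtain es ds n where es0: "es 0 = cex_enc"
    and br: "\<forall>k\<le>n. dec_br cex (es k) (ds k) \<and> enc_br cex (ds k) (es (Suc k))"
    and e: "e = es (Suc n)" and d: "d = ds n"
    using assms unfolding api_output_def by blast
  have "enc_eq cex (es k) cex_enc" if "k \<le> Suc n" for k
    using that
  proof (induction k)
    case 0
    then show ?case by (simp add: es0 enc_eq_def)
  next
    case (Suc k)
    then have "dec_br cex (es k) (ds k)" and enc_br: "enc_br cex (ds k) (es (Suc k))"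
      using br by simp_all
    then have "valid_dec cex (ds k) \<and> dec_eq cex (ds k) cex_dec"
      using dec_br_cex_enc_iff Suc by simp
    then show ?case
      using enc_br_cex_dec enc_br by blast
  qed
  then show "enc_eq cex e cex_enc"
    using e by simp
  show "valid_dec cex d"
    using br d by (simp add: dec_br_def)
qed

lemma api_output_cex_enc: "api_output cex cex_enc cex_enc cex_dec"
proof -
  have "dec_br cex cex_enc cex_dec"
    using dec_br_cex_enc_iff[of cex_enc] valid_cex_dec by (simp add: enc_eq_def dec_eq_def)
  then show ?thesis
    unfolding api_output_def using enc_br_cex_enc
    by (intro exI[of _ "\<lambda>_. cex_enc"] exI[of _ "\<lambda>_. cex_dec"] exI[of _ 1])
       (simp add: enc_eq_def dec_eq_def)
qed

theorem lemma3:
  shows "\<exists>(I::inst) (e0::enc). valid_inst I \<and>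
           (\<exists>e d. api_output I e0 e d) \<and> (\<exists>tau dp. per_opt I tau dp) \<and>
           (\<forall>e d. api_output I e0 e d \<longrightarrow>
              (\<forall>tau dp. per_opt I tau dp \<longrightarrow> Ret I e d < Ret I (per_enc tau) dp))"
proof -
  have api_worse: "Ret cex e d < Ret cex (per_enc tau) dp"
    if api: "api_output cex cex_enc e d" and per: "per_opt cex tau dp" for e d tau dp
  proof -
    have "Ret cex e d \<le> 400/49"
      using Ret_cex_enc_le api_output_cex[OF api] by blast
    also have "\<dots> < Ret cex (per_enc 1) per_dec"
      unfolding Ret_per_dec by simp
    also have "\<dots> \<le> Ret cex (per_enc tau) dp"
      using per valid_per_dec unfolding per_opt_def by auto
    finally show ?thesis .
  qed
  show ?thesis
    using valid_cex api_output_cex_enc per_opt_cex api_worse by blast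
qed

end
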